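(* Let $G=(V,E)$ be a $d$-regular undirected graph on $n=|V|$ vertices with $0<d<n$, where $E\subseteq V\times V$ is viewed as a symmetric set of ordered pairs (so $|E|=dn$). Let $g,h\colon V\to V$ be arbitrary functions and let $f=(g,h)\colon V\times V\to V\times V$ be given by $f(u,v)=(g(u),h(v))$. Let $$T=\Pr_{b\xleftarrow{u}\{0,1\}}\big(\mathrm{dec}_G(f(\mathrm{enc}_G(b)))=1-b\big),$$ where the probability is over the uniform choice of $b$ and the randomness of $\mathrm{enc}_G$. Then $$T=\frac12+\frac{1}{2d(n-d)}\sum_{(v,u)\in E}\left(\frac{d\,|g^{-1}(v)|\cdot|h^{-1}(u)|}{n}-\big|E\big(g^{-1}(v),h^{-1}(u)\big)\big|\right).$$
   Context: For subsets $S,T\subseteq V$, $E(S,T)=\{(v,u)\in S\times T : (v,u)\in E\}$ (directed edges from $S$ to $T$). The graph code $(\mathrm{enc}_G,\mathrm{dec}_G)$ of $G$ consists of a randomized map $\mathrm{enc}_G\colon\{0,1\}\to V\times V$ and a deterministic map $\mathrm{dec}_G\colon V\times V\to\{0,1\}$: $\mathrm{enc}_G(0)$ is a uniformly random pair $(u,v)\in (V\times V)\setminus E$, $\mathrm{enc}_G(1)$ is a uniformly random pair $(u,v)\in E$, and $\mathrm{dec}_G(v_1,v_2)=1$ if $(v_1,v_2)\in E$ and $0$ otherwise. *)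

theory Defs
  imports "HOL-Probability.Probability"
begin

definition edges_between :: "('a \<times> 'a) set \<Rightarrow> 'a set \<Rightarrow> 'a set \<Rightarrow> ('a \<times> 'a) set" where
  "edges_between E S T = {(v,u) \<in> S \<times> T. (v,u) \<in> E}"

definition enc_G :: "'a set \<Rightarrow> ('a \<times> 'a) set \<Rightarrow> nat \<Rightarrow> ('a \<times> 'a) pmf" where
  "enc_G V E b = (if b = 0 then pmf_of_set ((V \<times> V) - E) else pmf_of_set E)"

definition dec_G :: "('a \<times> 'a) set \<Rightarrow> 'a \<times> 'a \<Rightarrow> nat" where
  "dec_G E p = (if p \<in> E then 1 else 0)"

definition preim :: "'a set \<Rightarrow> ('a \<Rightarrow> 'a) \<Rightarrow> 'a \<Rightarrow> 'a set" where
  "preim V g v = {u \<in> V. g u = v}"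

end

theory Submission
  imports Defs
begin

text \<open>Conditioning on the bit, the error probability is the average of
  \<open>Pr[f x \<in> E]\<close> for \<open>x\<close> uniform on the non-edges and \<open>Pr[f x \<notin> E]\<close> for \<open>x\<close> uniform on
  the edges. With \<open>A\<close> the number of pairs of \<open>V \<times> V\<close> that \<open>f\<close> maps into \<open>E\<close> and \<open>B\<close>
  the number of those that are edges themselves, these are \<open>(A - B) / (n\<^sup>2 - d n)\<close> and \<open>1 - B / (d n)\<close>. For
  \<open>f = (g, h)\<close>, splitting both counts along the fibres of \<open>f\<close> over the edges \<open>(v, u)\<close>
  gives \<open>A = \<Sum> |g\<^sup>-\<^sup>1(v)| |h\<^sup>-\<^sup>1(u)|\<close> and \<open>B = \<Sum> |E(g\<^sup>-\<^sup>1(v), h\<^sup>-\<^sup>1(u))|\<close>.\<close>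

lemma measure_pmf_bind_pmf_of_set:
  assumes "finite A" "A \<noteq> {}"
  shows "measure_pmf.prob (pmf_of_set A \<bind> F) S = (\<Sum>a\<in>A. measure_pmf.prob (F a) S) / card A"
proof -
  have "measure_pmf.prob (pmf_of_set A \<bind> F) S = (\<integral>a. measure_pmf.prob (F a) S \<partial>pmf_of_set A)"
    unfolding measure_pmf_bind
    by (rule measure_pmf.measure_bind[where N="count_space UNIV"]) (auto simp: measure_subprob)
  then show ?thesis
    using assms by (simp add: integral_pmf_of_set)
qed

lemma measure_pmf_bind_return_Pair:
  "measure_pmf.prob (p \<bind> (\<lambda>x. return_pmf (b, x))) S = measure_pmf.prob p {x. (b, x) \<in> S}"
  by (simp add: map_pmf_def[symmetric] vimage_def)

lemma card_filter_eq_sum_card_fibres: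
  assumes "finite S" "finite T"
  shows "card {x\<in>S. f x \<in> T} = (\<Sum>y\<in>T. card {x\<in>S. f x = y})"
proof -
  have "{x\<in>S. f x \<in> T} = (\<Union>y\<in>T. {x\<in>S. f x = y})"
    by auto
  then show ?thesis
    using assms by (simp add: card_UN_disjoint disjoint_iff)
qed

lemma card_map_prod_into_edges:
  assumes "finite V" "finite E"
  shows "card {x \<in> V \<times> V. map_prod g h x \<in> E} = (\<Sum>(v, u)\<in>E. card (preim V g v) * card (preim V h u))"
proof -
  have fibre: "{x \<in> V \<times> V. map_prod g h x = (v, u)} = preim V g v \<times> preim V h u" for v u
    by (auto simp: preim_def)
  have "card {x \<in> V \<times> V. map_prod g h x \<in> E} = (\<Sum>p\<in>E. card {x \<in> V \<times> V. map_prod g h x = p})"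
    using assms by (simp add: card_filter_eq_sum_card_fibres)
  also have "\<dots> = (\<Sum>(v, u)\<in>E. card (preim V g v) * card (preim V h u))"
    by (intro sum.cong refl) (clarsimp simp: fibre card_cartesian_product)
  finally show ?thesis .
qed

lemma card_edges_map_prod_into_edges:
  assumes "finite V" "E \<subseteq> V \<times> V"
  shows "card {x \<in> E. map_prod g h x \<in> E}
       = (\<Sum>(v, u)\<in>E. card (edges_between E (preim V g v) (preim V h u)))"
proof -
  have fibre: "{x \<in> E. map_prod g h x = (v, u)} = edges_between E (preim V g v) (preim V h u)" for v u
    using assms(2) by (auto simp: preim_def edges_between_def)
  have "finite E"
    using assms finite_subset by blast
  then have "card {x \<in> E. map_prod g h x \<in> E} = (\<Sum>p\<in>E. card {x \<in> E. map_prod g h x = p})"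
    by (simp add: card_filter_eq_sum_card_fibres)
  also have "\<dots> = (\<Sum>(v, u)\<in>E. card (edges_between E (preim V g v) (preim V h u)))"
    by (intro sum.cong refl) (clarsimp simp: fibre)
  finally show ?thesis .
qed

lemma card_edges_regular:
  assumes "finite V" "E \<subseteq> V \<times> V" "\<And>v. v \<in> V \<Longrightarrow> card {u \<in> V. (v, u) \<in> E} = d"
  shows "card E = d * card V"
proof -
  have "E = (SIGMA v:V. {u \<in> V. (v, u) \<in> E})"
    using assms(2) by auto
  then have "card E = card (SIGMA v:V. {u \<in> V. (v, u) \<in> E})"
    by (rule arg_cong)
  also have "\<dots> = (\<Sum>v\<in>V. card {u \<in> V. (v, u) \<in> E})"
    using assms(1) by (simp add: card_SigmaI)
  finally show ?thesis
    using assms(3) by simp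
qed

lemma graph_code_error_prob:
  assumes "finite V" "E \<subseteq> V \<times> V" "E \<noteq> {}" "E \<noteq> V \<times> V"
  shows "measure_pmf.prob
           (do { b \<leftarrow> pmf_of_set {0::nat, 1}; x \<leftarrow> enc_G V E b; return_pmf (b, x) })
           {(b, x). dec_G E (f x) = 1 - b}
       = (card ((V \<times> V - E) \<inter> f -` E) / card (V \<times> V - E) + card (E - f -` E) / card E) / 2"
proof -
  let ?err = "{(b, x). dec_G E (f x) = 1 - b}"
  have "finite E"
    using assms(1,2) finite_subset by blast
  have "V \<times> V - E \<noteq> {}"
    using assms(2,4) by blast
  have "{x. (0::nat, x) \<in> ?err} = f -` E" "{x. (1::nat, x) \<in> ?err} = - f -` E"
    by (auto simp: dec_G_def)
  then have "measure_pmf.prob (do { b \<leftarrow> pmf_of_set {0::nat, 1}; x \<leftarrow> enc_G V E b; return_pmf (b, x) }) ?err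
      = (measure_pmf.prob (pmf_of_set (V \<times> V - E)) (f -` E)
         + measure_pmf.prob (pmf_of_set E) (- f -` E)) / 2"
    by (simp add: measure_pmf_bind_pmf_of_set measure_pmf_bind_return_Pair enc_G_def)
  also have "\<dots> = (card ((V \<times> V - E) \<inter> f -` E) / card (V \<times> V - E) + card (E - f -` E) / card E) / 2"
    using \<open>finite E\<close> \<open>V \<times> V - E \<noteq> {}\<close> assms(1,3) by (simp add: measure_pmf_of_set Diff_eq)
  finally show ?thesis .
qed

lemma graph_code_error_prob_regular:
  assumes "finite V" "E \<subseteq> V \<times> V" "card E = d * card V" "0 < d" "d < card V"
  shows "measure_pmf.prob
           (do { b \<leftarrow> pmf_of_set {0::nat, 1}; x \<leftarrow> enc_G V E b; return_pmf (b, x) })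
           {(b, x). dec_G E (f x) = 1 - b}
       = 1/2 + 1 / (2 * real d * real (card V - d)) *
           (real d * card {x \<in> V \<times> V. f x \<in> E} / card V - card {x \<in> E. f x \<in> E})"
proof -
  define n where "n = card V"
  define A where "A = card {x \<in> V \<times> V. f x \<in> E}"
  define B where "B = card {x \<in> E. f x \<in> E}"
  have "finite E"
    using assms(1,2) finite_subset by blast
  have "B \<le> A"
    unfolding A_def B_def using assms(1,2) by (intro card_mono) auto
  have "B \<le> d * n"
    unfolding B_def n_def assms(3)[symmetric] using \<open>finite E\<close> by (intro card_mono) auto
  have card_non_edges: "card (V \<times> V - E) = n * n - d * n"
    using assms(2,3) \<open>finite E\<close> by (simp add: card_Diff_subset card_cartesian_product n_def)
  have "E \<noteq> {}" "E \<noteq> V \<times> V"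
    using assms(3-5) card_non_edges by (auto simp: n_def)
  have "(V \<times> V - E) \<inter> f -` E = {x \<in> V \<times> V. f x \<in> E} - {x \<in> E. f x \<in> E}"
    by auto
  moreover have "{x \<in> E. f x \<in> E} \<subseteq> {x \<in> V \<times> V. f x \<in> E}"
    using assms(2) by auto
  ultimately have card_err0: "card ((V \<times> V - E) \<inter> f -` E) = A - B"
    unfolding A_def B_def using \<open>finite E\<close> by (simp add: card_Diff_subset)
  have "E - f -` E = E - {x \<in> E. f x \<in> E}"
    by auto
  then have card_err1: "card (E - f -` E) = d * n - B"
    unfolding B_def n_def assms(3)[symmetric] using \<open>finite E\<close> by (simp add: card_Diff_subset)
  have "measure_pmf.prob
           (do { b \<leftarrow> pmf_of_set {0::nat, 1}; x \<leftarrow> enc_G V E b; return_pmf (b, x) })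
           {(b, x). dec_G E (f x) = 1 - b}
      = (real (A - B) / real (n * n - d * n) + real (d * n - B) / real (d * n)) / 2"
    using graph_code_error_prob[OF assms(1,2) \<open>E \<noteq> {}\<close> \<open>E \<noteq> V \<times> V\<close>, of f]
    by (simp only: card_err0 card_err1 card_non_edges assms(3) n_def)
  also have "\<dots> = 1/2 + 1 / (2 * real d * real (n - d)) * (real d * real A / real n - real B)"
  proof -
    have "real (n * n - d * n) = real n * (real n - real d)"
      using assms(5) by (simp add: n_def of_nat_diff algebra_simps)
    moreover have "real d > 0" "real n > real d"
      using assms(4,5) by (auto simp: n_def)
    ultimately show ?thesis
      using \<open>B \<le> A\<close> \<open>B \<le> d * n\<close> assms(5) by (simp add: of_nat_diff n_def field_simps)
  qed
  finally show ?thesis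
    unfolding A_def B_def n_def .
qed

theorem proposition3p2:
  fixes V :: "'a set" and E :: "('a \<times> 'a) set" and d n :: nat and g h :: "'a \<Rightarrow> 'a"
  assumes finV: "finite V"
    and n_def: "n = card V"
    and E_sub: "E \<subseteq> V \<times> V"
    and E_sym: "\<And>u v. (u, v) \<in> E \<Longrightarrow> (v, u) \<in> E"
    and regular: "\<And>v. v \<in> V \<Longrightarrow> card {u \<in> V. (v, u) \<in> E} = d"
    and d_pos: "0 < d" and d_lt: "d < n"
    and g_maps: "g ` V \<subseteq> V" and h_maps: "h ` V \<subseteq> V"
  shows "measure_pmf.prob
           (do { b \<leftarrow> pmf_of_set {0::nat, 1};
                 x \<leftarrow> enc_G V E b;
                 return_pmf (b, x) })
           {(b, x). dec_G E ((\<lambda>(u, v). (g u, h v)) x) = 1 - b}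
       = 1/2 + 1 / (2 * real d * real (n - d)) *
           (\<Sum>(v, u)\<in>E. real d * real (card (preim V g v)) * real (card (preim V h u)) / real n
                         - real (card (edges_between E (preim V g v) (preim V h u))))"
proof -
  have "finite E"
    using finV E_sub finite_subset by blast
  have "card E = d * n"
    using card_edges_regular[OF finV E_sub regular] n_def by simp
  moreover have "(\<lambda>(u, v). (g u, h v)) = map_prod g h"
    by (simp add: map_prod_def)
  ultimately have "measure_pmf.prob
           (do { b \<leftarrow> pmf_of_set {0::nat, 1}; x \<leftarrow> enc_G V E b; return_pmf (b, x) })
           {(b, x). dec_G E ((\<lambda>(u, v). (g u, h v)) x) = 1 - b}
      = 1/2 + 1 / (2 * real d * real (n - d)) *
           (real d * card {x \<in> V \<times> V. map_prod g h x \<in> E} / n - card {x \<in> E. map_prod g h x \<in> E})"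
    using graph_code_error_prob_regular[OF finV E_sub _ d_pos, where f="map_prod g h"] d_lt n_def by simp
  also have "real d * card {x \<in> V \<times> V. map_prod g h x \<in> E} / n - card {x \<in> E. map_prod g h x \<in> E}
      = (\<Sum>(v, u)\<in>E. real d * real (card (preim V g v)) * real (card (preim V h u)) / real n
                      - real (card (edges_between E (preim V g v) (preim V h u))))"
    unfolding card_map_prod_into_edges[OF finV \<open>finite E\<close>] card_edges_map_prod_into_edges[OF finV E_sub]
    by (simp add: sum_subtractf sum_distrib_left sum_divide_distrib case_prod_beta mult.assoc)
  finally show ?thesis .
qed

end
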